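(* Let $n\ge7$ be odd, $p>\frac{309n+62}{2}$ a prime, and $\mathcal{G}$ a strongly connected digraph with more than one vertex. In the dgl $\tilde{\mathcal L}$, for all vertices $s\neq s'$ of $\mathcal{G}$, the brackets $[x_s,[x_s,[x_{s'},[w_1,w_2]]]]$, $[x_s,[x_{s'},[x_s,[w_1,w_2]]]]$, $[x_{s'},[x_s,[x_s,[w_1,w_2]]]]$ are linearly independent, and any nonzero linear combination of them is not a boundary in $\tilde{\mathcal L}$.
   Context: $\tilde{\mathcal L}=(\mathbb{L}(w_1,w_2,w_3,w_4,w_5,x_v\mid v\in V(\mathcal G)),\partial)$ is the free differential graded Lie algebra over $\mathbb{Z}_{(p)}$ with $|w_1|=16n+3$, $|w_2|=21n+4$, $|w_3|=28n+5$, $|w_4|=42n+9$, $|w_5|=56n+11$, $|x_v|=96n+18$, and differential (of degree $-1$) $\partial(w_1)=\partial(w_2)=\partial(w_3)=\partial(x_v)=0$, $\partial(w_4)=[w_2,w_2]$, $\partial(w_5)=[w_3,w_3]$. A digraph is strongly connected if any two vertices are joined by a directed path. *)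

theory Defs
  imports Main "HOL-Computational_Algebra.Primes" "Graph_Theory.Digraph_Component"
begin

datatype 'a gen = W nat | X 'a

fun gdeg :: "nat \<Rightarrow> 'a gen \<Rightarrow> nat" where
  "gdeg n (W i) = (if i = 1 then 16*n+3 else if i = 2 then 21*n+4 else if i = 3 then 28*n+5
                   else if i = 4 then 42*n+9 else if i = 5 then 56*n+11 else 0)"
| "gdeg n (X v) = 96*n+18"

definition wdeg :: "nat \<Rightarrow> 'a gen list \<Rightarrow> nat" where
  "wdeg n u = sum_list (map (gdeg n) u)"

text \<open>The local ring Z_(p), as a subset of the rationals.\<close>
definition Zloc :: "nat \<Rightarrow> rat set" where
  "Zloc p = {q. coprime (snd (quotient_of q)) (int p)}"

text \<open>Elements of the tensor algebra T(V) are coefficient functions on words.\<close>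
type_synonym 'a tens = "'a gen list \<Rightarrow> rat"

definition gvec :: "'a gen \<Rightarrow> 'a tens" where
  "gvec x = (\<lambda>w. if w = [x] then 1 else 0)"

definition tadd :: "'a tens \<Rightarrow> 'a tens \<Rightarrow> 'a tens" where
  "tadd f g = (\<lambda>w. f w + g w)"

definition tsmult :: "rat \<Rightarrow> 'a tens \<Rightarrow> 'a tens" where
  "tsmult c f = (\<lambda>w. c * f w)"

text \<open>Graded commutator [a,b] = ab - (-1)^(|a||b|) ba, extended bilinearly.\<close>
definition tbr :: "nat \<Rightarrow> 'a tens \<Rightarrow> 'a tens \<Rightarrow> 'a tens" where
  "tbr n f g = (\<lambda>w. \<Sum>i\<in>{0..length w}.
      f (take i w) * g (drop i w)
      - (-1) ^ (wdeg n (take i w) * wdeg n (drop i w)) * g (take i w) * f (drop i w))"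

definition dgen :: "nat \<Rightarrow> 'a gen \<Rightarrow> 'a tens" where
  "dgen n x = (if x = W 4 then tbr n (gvec (W 2)) (gvec (W 2))
               else if x = W 5 then tbr n (gvec (W 3)) (gvec (W 3))
               else (\<lambda>_. 0))"

text \<open>The differential, extended to T(V) as the derivation of degree -1 with Koszul sign:
  d(x_1...x_k) = sum_j (-1)^(|x_1...x_(j-1)|) x_1...x_(j-1) d(x_j) x_(j+1)...x_k.
  The coefficient of a word w = pre @ mid @ suf collects the contribution of
  pre @ [x] @ suf with x a generator with nonzero differential (w4 or w5).\<close>
definition tdiff :: "nat \<Rightarrow> 'a tens \<Rightarrow> 'a tens" where
  "tdiff n f = (\<lambda>w. \<Sum>i\<in>{0..length w}. \<Sum>k\<in>{i..length w}. \<Sum>x\<in>{W 4, W 5}.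
      (-1) ^ (wdeg n (take i w)) * f (take i w @ [x] @ drop k w)
        * dgen n x (take (k - i) (drop i w)))"

text \<open>The free graded Lie algebra L(w_1,...,w_5, x_v | v in V) over Z_(p),
  realised as the Lie subalgebra of the tensor algebra generated by the generators.\<close>
inductive_set fdgl :: "nat \<Rightarrow> nat \<Rightarrow> 'a set \<Rightarrow> 'a tens set" for n p V where
  genW: "i \<in> {1..5} \<Longrightarrow> gvec (W i) \<in> fdgl n p V"
| genX: "v \<in> V \<Longrightarrow> gvec (X v) \<in> fdgl n p V"
| zero: "(\<lambda>_. 0) \<in> fdgl n p V"
| add: "f \<in> fdgl n p V \<Longrightarrow> g \<in> fdgl n p V \<Longrightarrow> tadd f g \<in> fdgl n p V"
| smult: "c \<in> Zloc p \<Longrightarrow> f \<in> fdgl n p V \<Longrightarrow> tsmult c f \<in> fdgl n p V"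
| br: "f \<in> fdgl n p V \<Longrightarrow> g \<in> fdgl n p V \<Longrightarrow> tbr n f g \<in> fdgl n p V"

end

theory Submission
  imports Defs
begin

text \<open>The bracket [x, f] of a generator x with f has, at a word x u not ending
  in x, the coefficient of f at u. Peeling off the leading generators therefore shows that
  each of the three brackets has coefficient 1 at the word spelled by its own generators
  (x_s x_s x_s' w_1 w_2, x_s x_s' x_s w_1 w_2, x_s' x_s x_s w_1 w_2) and coefficient 0 at
  the other two, so a linear combination has coefficients a, b, c there. On the other hand
  d is nonzero only on w_4 and w_5, with d w_4 = [w_2,w_2] and d w_5 = [w_3,w_3], so every
  boundary is supported on words containing w_2 twice or w_3 twice; the three words contain
  each only once.\<close>

lemma tbr_gvec_Cons:
  assumes "last (y # w) \<noteq> x"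
  shows "tbr n (gvec x) g (y # w) = (if y = x then g w else 0)"
proof -
  let ?I = "{0..length (y # w)}"
  have take_single: "take i (y # w) = [x] \<longleftrightarrow> i = 1 \<and> y = x" if "i \<in> ?I" for i
    using that by (cases i) (auto simp: take_eq_Nil)
  have drop_not_single: "drop i (y # w) \<noteq> [x]" for i
    using assms last_drop[of i "y # w"]
    by (metis drop_all last_ConsL list.distinct(1) not_le_imp_less)
  have "tbr n (gvec x) g (y # w)
      = (\<Sum>i\<in>?I. if i = 1 then (if y = x then g w else 0) else 0)"
    unfolding tbr_def gvec_def
    by (intro sum.cong refl) (auto simp: drop_not_single take_single)
  then show ?thesis by (simp only: sum.delta finite_atLeastAtMost) simp
qed

lemma count_list_take_drop_le: "count_list (take j (drop i w)) a \<le> count_list w a"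
proof -
  have "w = take i w @ take j (drop i w) @ drop j (drop i w)"
    by (simp only: append_take_drop_id)
  then have "count_list w a
      = count_list (take i w) a + count_list (take j (drop i w)) a + count_list (drop j (drop i w)) a"
    by (metis count_list_append add.assoc)
  then show ?thesis by linarith
qed

lemma tbr_gvec_gvec_eq_0:
  assumes "w \<noteq> [a, b]" and "w \<noteq> [b, a]"
  shows "tbr n (gvec a) (gvec b) w = 0"
proof -
  have split_coeff: "gvec c (take i w) * gvec d (drop i w) = 0" if "w \<noteq> [c, d]" for c d i
  proof -
    have "take i w \<noteq> [c] \<or> drop i w \<noteq> [d]"
      using that append_take_drop_id[of i w] by fastforce
    then show ?thesis by (auto simp: gvec_def)
  qed
  show ?thesis
    unfolding tbr_def by (simp add: split_coeff assms mult.assoc)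
qed

lemma dgen_eq_0:
  assumes "count_list w (W 2) < 2" and "count_list w (W 3) < 2"
  shows "dgen n x w = 0"
proof -
  have "w \<noteq> [W 2, W 2]" "w \<noteq> [W 3, W 3]" using assms by auto
  then show ?thesis by (simp add: dgen_def tbr_gvec_gvec_eq_0)
qed

lemma tdiff_eq_0:
  assumes "count_list w (W 2) < 2" and "count_list w (W 3) < 2"
  shows "tdiff n y w = 0"
proof -
  have "dgen n x (take j (drop i w)) = 0" for x i j
    using assms count_list_take_drop_le[of j i w] by (intro dgen_eq_0) (meson le_less_trans)+
  then show ?thesis
    unfolding tdiff_def by simp
qed

theorem lemma3p3:
  fixes n p :: nat and G :: "('a, 'b) pre_digraph" and s s' :: 'a
  assumes "odd n" and "n \<ge> 7"
    and "prime p" and "real p > (309 * real n + 62) / 2"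
    and "wf_digraph G" and "strongly_connected G"
    and "\<exists>u v. u \<in> verts G \<and> v \<in> verts G \<and> u \<noteq> v"
    and "s \<in> verts G" and "s' \<in> verts G" and "s \<noteq> s'"
  defines "w12 \<equiv> tbr n (gvec (W 1)) (gvec (W 2))"
  defines "e1 \<equiv> tbr n (gvec (X s)) (tbr n (gvec (X s)) (tbr n (gvec (X s')) w12))"
    and "e2 \<equiv> tbr n (gvec (X s)) (tbr n (gvec (X s')) (tbr n (gvec (X s)) w12))"
    and "e3 \<equiv> tbr n (gvec (X s')) (tbr n (gvec (X s)) (tbr n (gvec (X s)) w12))"
  defines "comb \<equiv> (\<lambda>a b c. tadd (tsmult a e1) (tadd (tsmult b e2) (tsmult c e3)))"
  shows "(\<forall>a\<in>Zloc p. \<forall>b\<in>Zloc p. \<forall>c\<in>Zloc p.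
            comb a b c = (\<lambda>_. 0) \<longrightarrow> a = 0 \<and> b = 0 \<and> c = 0)
       \<and> (\<forall>a\<in>Zloc p. \<forall>b\<in>Zloc p. \<forall>c\<in>Zloc p. (a, b, c) \<noteq> (0, 0, 0) \<longrightarrow>
            \<not> (\<exists>y \<in> fdgl n p (verts G). tdiff n y = comb a b c))"
proof -
  define u1 where "u1 = [X s, X s, X s', W 1, W 2]"
  define u2 where "u2 = [X s, X s', X s, W 1, W 2]"
  define u3 where "u3 = [X s', X s, X s, W 1, W 2]"
  have comb_coeffs: "comb a b c u1 = a" "comb a b c u2 = b" "comb a b c u3 = c" for a b c
    using \<open>s \<noteq> s'\<close> unfolding comb_def e1_def e2_def e3_def w12_def u1_def u2_def u3_def
    by (simp_all add: tadd_def tsmult_def tbr_gvec_Cons) (simp_all add: gvec_def)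
  have boundary_coeffs: "tdiff n y u1 = 0" "tdiff n y u2 = 0" "tdiff n y u3 = 0" for y :: "'a tens"
    unfolding u1_def u2_def u3_def by (rule tdiff_eq_0; simp)+
  show ?thesis
    using comb_coeffs boundary_coeffs by (metis prod.inject)
qed

end
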